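(* Let $N=2$, $v_1<v_2$, $p(v_1)=p(v_2)=\tfrac12$, and $\lambda,\sigma_Z,T>0$, $G$ the CDF of $N(0,\sigma_Z^2T)$. (a) For an $M$-state signal with probabilities satisfying $q(s_m)=q(s_{M+1-m})$ for all $1\le m\le M$, the Lagrange multipliers $(\mu_1,\mu_2)$ for which the posteriors $p(v_n|s_m)=e^{(v_nI_m+\mu_n)/\lambda}/\sum_{n'=1}^2e^{(v_{n'}I_m+\mu_{n'})/\lambda}$ satisfy $\sum_mp(v_n|s_m)q(s_m)=p(v_n)$, $n=1,2$, are zero (up to the common additive constant), i.e. $\mu_1=\mu_2=0$ is a solution. (b) The same holds for symmetric continuous signals with posteriors $p(v_n|s)=e^{[v_nG^{-1}(Q(s))+\mu_n]/\lambda}/\sum_{n'}e^{[v_{n'}G^{-1}(Q(s))+\mu_{n'}]/\lambda}$ and constraint $\int p(v_n|s)q(s)\,ds=p(v_n)$.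
   Context: For an $M$-state signal with probabilities $q(s_m)$, $Q_0=0$, $Q_m=\sum_{i\le m}q(s_i)$ and $I_m=\frac1{q(s_m)}\int_{Q_{m-1}}^{Q_m}G^{-1}(u)\,du$. For a continuous signal, $q$ is its density and $Q$ its CDF. The multipliers $(\mu_1,\mu_2)$ satisfying the Bayes plausibility constraint are unique up to adding a common constant. *)

theory Defs
  imports "HOL-Probability.Probability"
begin

definition G :: "real \<Rightarrow> real \<Rightarrow> real \<Rightarrow> real" where
  "G sigmaZ T x = (LINT y:{..x}|lborel. normal_density 0 (sqrt (sigmaZ^2 * T)) y)"

text \<open>Quantile function G^{-1} on (0,1); fixed to 0 outside (a null set, irrelevant).\<close>
definition G_inv :: "real \<Rightarrow> real \<Rightarrow> real \<Rightarrow> real" where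
  "G_inv sigmaZ T u = (if 0 < u \<and> u < 1 then (THE x. G sigmaZ T x = u) else 0)"

definition Qd :: "(nat \<Rightarrow> real) \<Rightarrow> nat \<Rightarrow> real" where
  "Qd q m = (\<Sum>i=1..m. q i)"

definition Isig :: "real \<Rightarrow> real \<Rightarrow> (nat \<Rightarrow> real) \<Rightarrow> nat \<Rightarrow> real" where
  "Isig sigmaZ T q m = (1 / q m) * (LINT u:{Qd q (m - 1)..Qd q m}|lborel. G_inv sigmaZ T u)"

definition Qc :: "(real \<Rightarrow> real) \<Rightarrow> real \<Rightarrow> real" where
  "Qc q s = (LINT t:{..s}|lborel. q t)"

definition post :: "real \<Rightarrow> (nat \<Rightarrow> real) \<Rightarrow> (nat \<Rightarrow> real) \<Rightarrow> nat \<Rightarrow> real \<Rightarrow> real" where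
  "post lam v mu n x = exp ((v n * x + mu n) / lam) /
      (\<Sum>n'\<in>{1,2}. exp ((v n' * x + mu n') / lam))"

end

theory Submission
  imports Defs
begin

(* With mu = 0 the two-point posterior satisfies p(v_n | -x) + p(v_n | x) = 1. The normal CDF
   satisfies G(-x) = 1 - G(x), so its quantile is odd about 1/2: G^-1(1 - u) = -G^-1(u).
   For a symmetric signal Q_{M-m} = 1 - Q_m, hence I_{M+1-m} = -I_m, and in the continuous case
   Q(c - s) = 1 - Q(c + s). Pairing state m with M+1-m (resp. c - s with c + s) the posteriors of a
   pair add up to 1 while the weights agree, so the constraint sum equals half the total mass, 1/2. *)

lemma set_integrable_lborel_real:
  fixes f :: "real \<Rightarrow> real"
  assumes "integrable lborel f" "A \<in> sets borel"
  shows "set_integrable lborel A f"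
  using integrable_mult_indicator[OF _ assms(1), of A] assms(2)
  by (simp add: set_integrable_def)

lemma set_integral_atMost_diff:
  fixes f :: "real \<Rightarrow> real"
  assumes f: "integrable lborel f" and "x \<le> y"
  shows "(LINT t:{..y}|lborel. f t) - (LINT t:{..x}|lborel. f t) = (LINT t:{x<..y}|lborel. f t)"
proof -
  have "{..y} = {..x} \<union> {x<..y}" using \<open>x \<le> y\<close> by auto
  then have "(LINT t:{..y}|lborel. f t) = (LINT t:{..x}|lborel. f t) + (LINT t:{x<..y}|lborel. f t)"
    by (simp only:) (rule set_integral_Un; auto intro: set_integrable_lborel_real f)
  then show ?thesis by simp
qed

lemma mono_atMost_integral:
  fixes f :: "real \<Rightarrow> real"
  assumes f: "integrable lborel f" and nonneg: "\<And>t. 0 \<le> f t"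
  shows "mono (\<lambda>x. LINT t:{..x}|lborel. f t)"
proof (rule monoI)
  fix x y :: real assume "x \<le> y"
  have "0 \<le> (LINT t:{x<..y}|lborel. f t)"
    using nonneg by (simp add: set_lebesgue_integral_def)
  then show "(LINT t:{..x}|lborel. f t) \<le> (LINT t:{..y}|lborel. f t)"
    using set_integral_atMost_diff[OF f \<open>x \<le> y\<close>] by simp
qed

lemma strict_mono_atMost_integral:
  fixes f :: "real \<Rightarrow> real"
  assumes f: "integrable lborel f" and pos: "\<And>t. 0 < f t"
  shows "strict_mono (\<lambda>x. LINT t:{..x}|lborel. f t)"
proof (rule strict_monoI)
  fix x y :: real assume "x < y"
  have "0 \<le> (LINT t:{x<..y}|lborel. f t)"
    using pos by (simp add: set_lebesgue_integral_def less_imp_le)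
  moreover have "{x<..y} \<notin> null_sets lborel"
    using \<open>x < y\<close> by (simp add: null_sets_def)
  then have "(LINT t:{x<..y}|lborel. f t) \<noteq> 0"
    using null_if_pos_func_has_zero_int[OF f, of "{x<..y}"] pos by auto
  ultimately show "(LINT t:{..x}|lborel. f t) < (LINT t:{..y}|lborel. f t)"
    using set_integral_atMost_diff[OF f, of x y] \<open>x < y\<close> by simp
qed

lemma continuous_on_atMost_integral:
  fixes f :: "real \<Rightarrow> real"
  assumes f: "integrable lborel f" and bound: "\<And>t. \<bar>f t\<bar> \<le> K"
  shows "continuous_on A (\<lambda>x. LINT t:{..x}|lborel. f t)"
proof (rule lipschitz_on_continuous_on[of K], rule lipschitz_onI)
  have diff_bound: "\<bar>(LINT t:{..y}|lborel. f t) - (LINT t:{..x}|lborel. f t)\<bar> \<le> K * (y - x)"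
    if "x \<le> y" for x y
  proof -
    have int: "set_integrable lborel {x<..y} f" "set_integrable lborel {x<..y} (\<lambda>_. K)"
      "set_integrable lborel {x<..y} (\<lambda>_. - K)"
      using set_integrable_lborel_real[OF f] that by (auto simp: set_integrable_def)
    have "(LINT t:{x<..y}|lborel. f t) \<le> (LINT t:{x<..y}|lborel. K)"
      using bound by (intro set_integral_mono int) (simp add: abs_le_iff)
    moreover have "(LINT t:{x<..y}|lborel. - K) \<le> (LINT t:{x<..y}|lborel. f t)"
      using bound by (intro set_integral_mono int) (metis abs_le_D2 minus_le_iff)
    ultimately show ?thesis
      using set_integral_atMost_diff[OF f that] that
      by (simp add: set_lebesgue_integral_def abs_le_iff mult.commute)
  qed
  fix x y :: real
  show "dist (LINT t:{..x}|lborel. f t) (LINT t:{..y}|lborel. f t) \<le> K * dist x y"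
    using diff_bound[of x y] diff_bound[of y x]
    by (cases "x \<le> y") (auto simp: dist_real_def abs_minus_commute)
next
  show "0 \<le> K" using bound[of 0] by linarith
qed

lemma tendsto_atMost_integral_at_top:
  fixes f :: "real \<Rightarrow> real"
  assumes f: "integrable lborel f"
  shows "((\<lambda>x. LINT t:{..x}|lborel. f t) \<longlongrightarrow> (LINT t|lborel. f t)) at_top"
  unfolding set_lebesgue_integral_def
proof (rule integral_dominated_convergence_at_top[where w = "\<lambda>t. \<bar>f t\<bar>"])
  show "AE t in lborel. ((\<lambda>x. indicator {..x} t *\<^sub>R f t) \<longlongrightarrow> f t) at_top"
  proof (rule AE_I2, rule tendsto_eventually)
    fix t
    show "\<forall>\<^sub>F x in at_top. indicator {..x} t *\<^sub>R f t = f t"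
      using eventually_ge_at_top[of t] by eventually_elim auto
  qed
  show "\<forall>\<^sub>F x in at_top. AE t in lborel. norm (indicator {..x} t *\<^sub>R f t) \<le> \<bar>f t\<bar>"
    by (auto simp: indicator_def)
qed (use f in \<open>auto simp: integrable_mult_indicator\<close>)

lemma set_integral_atMost_reflect:
  fixes f :: "real \<Rightarrow> real"
  assumes f: "integrable lborel f" and sym: "\<And>s. f (c + s) = f (c - s)"
  shows "(LINT t:{..c - s}|lborel. f t) + (LINT t:{..c + s}|lborel. f t) = (LINT t|lborel. f t)"
proof -
  have "(LINT t:{..c - s}|lborel. f t)
      = (LINT t|lborel. indicator {..c - s} (2 * c - t) * f (2 * c - t))"
    unfolding set_lebesgue_integral_def
    using lborel_integral_real_affine[where c = "-1" and t = "2 * c"] by simp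
  also have "\<dots> = (LINT t:{c + s..}|lborel. f t)"
    unfolding set_lebesgue_integral_def
  proof (rule Bochner_Integration.integral_cong [OF refl])
    fix t
    have "f (2 * c - t) = f t" using sym[of "c - t"] by simp
    then show "indicator {..c - s} (2 * c - t) * f (2 * c - t) = indicator {c + s..} t *\<^sub>R f t"
      by (simp add: indicator_def)
  qed
  also have "\<dots> = (LINT t:{c + s<..}|lborel. f t)"
  proof (rule set_integral_null_delta[OF f])
    have "sym_diff {c + s..} {c + s<..} = {c + s}" by auto
    then show "sym_diff {c + s..} {c + s<..} \<in> null_sets lborel"
      by (simp add: countable_imp_null_set_lborel)
  qed auto
  finally have reflected: "(LINT t:{..c - s}|lborel. f t) = (LINT t:{c + s<..}|lborel. f t)" .
  have "(LINT t:{..c + s} \<union> {c + s<..}|lborel. f t)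
      = (LINT t:{..c + s}|lborel. f t) + (LINT t:{c + s<..}|lborel. f t)"
    by (rule set_integral_Un) (auto intro: set_integrable_lborel_real[OF f])
  moreover have "{..c + s} \<union> {c + s<..} = space lborel" by auto
  ultimately show ?thesis
    using reflected set_integral_space[OF f] by simp
qed

lemma set_integral_Icc_reflect:
  fixes g :: "real \<Rightarrow> real"
  shows "(LINT u:{c - b..c - a}|lborel. g u) = (LINT w:{a..b}|lborel. g (c - w))"
proof -
  have "(LINT u:{c - b..c - a}|lborel. g u)
      = (LINT w|lborel. indicator {c - b..c - a} (c - w) * g (c - w))"
    unfolding set_lebesgue_integral_def
    using lborel_integral_real_affine[where c = "-1" and t = c] by simp
  also have "\<dots> = (LINT w:{a..b}|lborel. g (c - w))"
    unfolding set_lebesgue_integral_def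
    by (rule Bochner_Integration.integral_cong) (auto simp: indicator_def)
  finally show ?thesis .
qed

lemma sum_mult_reflection_complementary:
  fixes h q :: "nat \<Rightarrow> real"
  assumes q_sym: "\<And>m. m \<in> {1..M} \<Longrightarrow> q (M + 1 - m) = q m"
    and h_compl: "\<And>m. m \<in> {1..M} \<Longrightarrow> h (M + 1 - m) + h m = 1"
  shows "(\<Sum>m=1..M. h m * q m) = (\<Sum>m=1..M. q m) / 2"
proof -
  have "(\<Sum>m=1..M. h m * q m) = (\<Sum>m=1..M. h (M + 1 - m) * q (M + 1 - m))"
    by (rule sum.reindex_bij_witness[where i = "\<lambda>m. M + 1 - m" and j = "\<lambda>m. M + 1 - m"]) auto
  also have "\<dots> = (\<Sum>m=1..M. h (M + 1 - m) * q m)"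
    using q_sym by simp
  finally have "2 * (\<Sum>m=1..M. h m * q m) = (\<Sum>m=1..M. (h (M + 1 - m) + h m) * q m)"
    by (simp add: sum.distrib distrib_right)
  also have "\<dots> = (\<Sum>m=1..M. q m)"
    using h_compl by simp
  finally show ?thesis by simp
qed

lemma integral_mult_reflection_complementary:
  fixes h q :: "real \<Rightarrow> real"
  assumes q: "integrable lborel q" and q_sym: "\<And>s. q (c + s) = q (c - s)"
    and h_meas: "h \<in> borel_measurable borel" and h_nonneg: "\<And>s. 0 \<le> h s"
    and h_compl: "\<And>s. h (c - s) + h (c + s) = 1"
  shows "integrable lborel (\<lambda>s. h s * q s)"
    and "(LINT s|lborel. h s * q s) = (LINT s|lborel. q s) / 2"
proof -
  have "h s \<le> 1" for s
  proof -
    have "h s + h (2 * c - s) = 1" using h_compl[of "c - s"] by simp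
    then show ?thesis using h_nonneg[of "2 * c - s"] by linarith
  qed
  then show hq: "integrable lborel (\<lambda>s. h s * q s)"
    using q h_meas h_nonneg
    by (intro Bochner_Integration.integrable_bound[OF q])
       (auto simp: abs_mult intro!: mult_left_le_one_le)
  have shift: "(LINT s|lborel. g s) = (LINT s|lborel. g (c + s))" for g :: "real \<Rightarrow> real"
    using lborel_integral_real_affine[where c = 1 and t = c and f = g] by simp
  have flip: "(LINT s|lborel. g s) = (LINT s|lborel. g (c - s))" for g :: "real \<Rightarrow> real"
    using lborel_integral_real_affine[where c = "-1" and t = c and f = g] by simp
  have int_plus: "integrable lborel (\<lambda>s. h (c + s) * q (c + s))"
    using lborel_integrable_real_affine_iff[of 1 "\<lambda>s. h s * q s" c] hq by simp
  have int_minus: "integrable lborel (\<lambda>s. h (c - s) * q (c + s))"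
    using lborel_integrable_real_affine_iff[of "-1" "\<lambda>s. h s * q s" c] hq by (simp add: q_sym)
  have "2 * (LINT s|lborel. h s * q s)
      = (LINT s|lborel. h (c - s) * q (c + s)) + (LINT s|lborel. h (c + s) * q (c + s))"
    using shift[of "\<lambda>s. h s * q s"] flip[of "\<lambda>s. h s * q s"] by (simp add: q_sym)
  also have "\<dots> = (LINT s|lborel. (h (c - s) + h (c + s)) * q (c + s))"
    using int_plus int_minus by (simp add: distrib_right)
  also have "\<dots> = (LINT s|lborel. q s)"
    using h_compl shift[of q] by simp
  finally show "(LINT s|lborel. h s * q s) = (LINT s|lborel. q s) / 2" by simp
qed

lemma Qd_reflect:
  assumes q_sym: "\<And>m. m \<in> {1..M} \<Longrightarrow> q (M + 1 - m) = q m" and "k \<le> M"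
  shows "Qd q (M - k) = Qd q M - Qd q k"
proof -
  have "(\<Sum>m=1..M - k. q m) = (\<Sum>m=k+1..M. q m)"
    by (rule sum.reindex_bij_witness[where i = "\<lambda>m. M + 1 - m" and j = "\<lambda>m. M + 1 - m"])
       (use q_sym \<open>k \<le> M\<close> in auto)
  moreover have "(\<Sum>m=1..M. q m) = (\<Sum>m=1..k. q m) + (\<Sum>m=k+1..M. q m)"
    using sum.ub_add_nat[of 1 k q "M - k"] \<open>k \<le> M\<close> by simp
  ultimately show ?thesis by (simp add: Qd_def)
qed

lemma post_reflect:
  assumes "n \<in> {1, 2}"
  shows "post lam v (\<lambda>_. 0) n (- x) + post lam v (\<lambda>_. 0) n x = 1"
proof -
  define a b where "a = exp (v 1 * x / lam)" and "b = exp (v 2 * x / lam)"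
  have "a > 0" "b > 0" by (auto simp: a_def b_def)
  have "exp (v 1 * - x / lam) = 1 / a" "exp (v 2 * - x / lam) = 1 / b"
    by (auto simp: a_def b_def exp_minus inverse_eq_divide)
  then have "post lam v (\<lambda>_. 0) n (- x) = (if n = 1 then 1 / a else 1 / b) / (1 / a + 1 / b)"
    using assms by (auto simp: post_def)
  also have "\<dots> = (if n = 1 then b else a) / (a + b)"
    using \<open>a > 0\<close> \<open>b > 0\<close> by (auto simp: field_simps)
  finally have post_minus: "post lam v (\<lambda>_. 0) n (- x) = (if n = 1 then b else a) / (a + b)" .
  have post_plus: "post lam v (\<lambda>_. 0) n x = (if n = 1 then a else b) / (a + b)"
    using assms by (auto simp: post_def a_def b_def)
  show ?thesis
    unfolding post_minus post_plus using \<open>a > 0\<close> \<open>b > 0\<close>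
    by (simp add: add_divide_distrib[symmetric] add.commute)
qed

lemma borel_measurable_post: "post lam v mu n \<in> borel_measurable borel"
  unfolding post_def by measurable

lemma normal_density_le_mean:
  assumes "0 < \<sigma>"
  shows "normal_density \<mu> \<sigma> x \<le> normal_density \<mu> \<sigma> \<mu>"
  using assms by (simp add: normal_density_def divide_right_mono)

lemma G_eq_atMost_integral:
  "G sigmaZ T = (\<lambda>x. LINT t:{..x}|lborel. normal_density 0 (sqrt (sigmaZ^2 * T)) t)"
  by (simp add: fun_eq_iff G_def)

context
  fixes sigmaZ T :: real
  assumes sigmaZ_pos: "sigmaZ > 0" and T_pos: "T > 0"
begin

lemma G_std_pos: "0 < sqrt (sigmaZ^2 * T)"
  using sigmaZ_pos T_pos by simp

lemma strict_mono_G: "strict_mono (G sigmaZ T)"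
  unfolding G_eq_atMost_integral using G_std_pos
  by (intro strict_mono_atMost_integral integrable_normal_density normal_density_pos)

lemma continuous_on_G: "continuous_on A (G sigmaZ T)"
proof -
  have "\<bar>normal_density 0 (sqrt (sigmaZ^2 * T)) t\<bar>
      \<le> normal_density 0 (sqrt (sigmaZ^2 * T)) 0" for t
    using normal_density_le_mean[OF G_std_pos, of 0 t] by simp
  from continuous_on_atMost_integral[OF integrable_normal_density[OF G_std_pos] this]
  show ?thesis by (simp add: G_eq_atMost_integral)
qed

lemma G_reflect: "G sigmaZ T (- x) = 1 - G sigmaZ T x"
proof -
  have "normal_density 0 (sqrt (sigmaZ^2 * T)) (0 + s)
      = normal_density 0 (sqrt (sigmaZ^2 * T)) (0 - s)" for s
    by (simp add: normal_density_def)
  from set_integral_atMost_reflect[OF integrable_normal_density this, of x]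
  have "G sigmaZ T (- x) + G sigmaZ T x = 1"
    using sigmaZ_pos T_pos by (simp add: G_def)
  then show ?thesis by linarith
qed

lemma G_tendsto_at_top: "(G sigmaZ T \<longlongrightarrow> 1) at_top"
  using tendsto_atMost_integral_at_top[of "normal_density 0 (sqrt (sigmaZ^2 * T))"] G_std_pos
  by (simp add: G_eq_atMost_integral)

lemma G_attains:
  assumes "0 < u" "u < 1"
  shows "\<exists>x. G sigmaZ T x = u"
proof -
  have "\<forall>\<^sub>F x in at_top. max u (1 - u) < G sigmaZ T x"
    using G_tendsto_at_top assms by (intro order_tendstoD) auto
  then obtain N where N: "\<And>x. N \<le> x \<Longrightarrow> max u (1 - u) < G sigmaZ T x"
    by (auto simp: eventually_at_top_linorder)
  define b where "b = max N 0"
  have b: "max u (1 - u) < G sigmaZ T b" "0 \<le> b"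
    using N[of b] by (simp_all add: b_def)
  then have "G sigmaZ T (- b) \<le> u" "u \<le> G sigmaZ T b"
    using G_reflect[of b] by simp_all
  then show ?thesis
    using IVT'[of "G sigmaZ T" "- b" u b] continuous_on_G \<open>0 \<le> b\<close> by auto
qed

lemma G_inv_eq_iff:
  assumes "0 < u" "u < 1"
  shows "G_inv sigmaZ T u = x \<longleftrightarrow> G sigmaZ T x = u"
proof -
  obtain x\<^sub>0 where x\<^sub>0: "G sigmaZ T x\<^sub>0 = u"
    using G_attains[OF assms] ..
  have unique: "\<exists>!x. G sigmaZ T x = u"
    by (rule ex1I[of _ x\<^sub>0]) (use x\<^sub>0 strict_mono_eq[OF strict_mono_G] in auto)
  have "G_inv sigmaZ T u = (THE x. G sigmaZ T x = u)"
    using assms by (simp add: G_inv_def)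
  then show ?thesis
    using theI'[OF unique] the1_equality[OF unique] by metis
qed

lemma G_inv_reflect: "G_inv sigmaZ T (1 - u) = - G_inv sigmaZ T u"
proof (cases "0 < u \<and> u < 1")
  case True
  then have "G sigmaZ T (G_inv sigmaZ T u) = u"
    using G_inv_eq_iff by blast
  then show ?thesis
    using True G_inv_eq_iff[of "1 - u"] G_reflect by simp
qed (auto simp: G_inv_def)

(* Off (0, 1) the quantile takes the junk value 0, so it is monotone only piecewise. *)
lemma borel_measurable_G_inv: "G_inv sigmaZ T \<in> borel_measurable borel"
proof (rule borel_measurable_piecewise_mono[of "{{..0}, {0<..<1}, {1..}}"])
  have "G_inv sigmaZ T u \<le> G_inv sigmaZ T w" if "u \<in> {0<..<1}" "w \<in> {0<..<1}" "u \<le> w" for u w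
  proof -
    have "G sigmaZ T (G_inv sigmaZ T u) \<le> G sigmaZ T (G_inv sigmaZ T w)"
      using that G_inv_eq_iff[of u "G_inv sigmaZ T u"] G_inv_eq_iff[of w "G_inv sigmaZ T w"] by auto
    then show ?thesis by (simp add: strict_mono_less_eq[OF strict_mono_G])
  qed
  then show "mono_on C (G_inv sigmaZ T)" if "C \<in> {{..0}, {0<..<1}, {1..}}" for C
    using that by (auto intro!: mono_onI simp: G_inv_def)
qed auto

lemma Isig_reflect:
  assumes q_sym: "\<And>m. m \<in> {1..M} \<Longrightarrow> q (M + 1 - m) = q m"
    and total: "Qd q M = 1" and m: "m \<in> {1..M}"
  shows "Isig sigmaZ T q (M + 1 - m) = - Isig sigmaZ T q m"
proof -
  have lower: "Qd q (M + 1 - m - 1) = 1 - Qd q m"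
    using Qd_reflect[where q = q and M = M and k = m, OF q_sym] total m by simp
  have "m - 1 \<le> M"
    using m by (auto intro: le_trans[OF diff_le_self])
  then have "Qd q (M - (m - 1)) = 1 - Qd q (m - 1)"
    using Qd_reflect[where q = q and M = M and k = "m - 1", OF q_sym] total by simp
  moreover have "M + 1 - m = M - (m - 1)"
    using m by auto
  ultimately have upper: "Qd q (M + 1 - m) = 1 - Qd q (m - 1)"
    by (simp only:)
  have "Isig sigmaZ T q (M + 1 - m)
      = (1 / q m) * (LINT u:{1 - Qd q m..1 - Qd q (m - 1)}|lborel. G_inv sigmaZ T u)"
    unfolding Isig_def lower upper q_sym[OF m] ..
  also have "\<dots> = (1 / q m) * (LINT w:{Qd q (m - 1)..Qd q m}|lborel. G_inv sigmaZ T (1 - w))"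
    by (simp only: set_integral_Icc_reflect)
  also have "\<dots> = - Isig sigmaZ T q m"
    by (simp add: G_inv_reflect Isig_def set_lebesgue_integral_def)
  finally show ?thesis .
qed

lemma sum_post_Isig_symmetric_signal:
  assumes n: "n \<in> {1, 2}"
    and q_sym: "\<And>m. m \<in> {1..M} \<Longrightarrow> q (M + 1 - m) = q m" and total: "(\<Sum>m=1..M. q m) = 1"
  shows "(\<Sum>m=1..M. post lam v (\<lambda>_. 0) n (Isig sigmaZ T q m) * q m) = 1 / 2"
proof -
  have Qd_total: "Qd q M = 1"
    using total by (simp add: Qd_def)
  have "post lam v (\<lambda>_. 0) n (Isig sigmaZ T q (M + 1 - m))
      + post lam v (\<lambda>_. 0) n (Isig sigmaZ T q m) = 1" if m: "m \<in> {1..M}" for m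
  proof -
    have "Isig sigmaZ T q (M + 1 - m) = - Isig sigmaZ T q m"
      using q_sym Qd_total m by (rule Isig_reflect)
    then show ?thesis
      using post_reflect[OF n, of lam v "Isig sigmaZ T q m"] by simp
  qed
  with q_sym have "(\<Sum>m=1..M. post lam v (\<lambda>_. 0) n (Isig sigmaZ T q m) * q m)
      = (\<Sum>m=1..M. q m) / 2"
    by (rule sum_mult_reflection_complementary)
  then show ?thesis
    using total by simp
qed

lemma integral_post_G_inv_Qc_symmetric_density:
  assumes n: "n \<in> {1, 2}"
    and q: "integrable lborel q" and q_nonneg: "\<And>s. 0 \<le> q s"
    and total: "(LINT s|lborel. q s) = 1" and q_sym: "\<And>s. q (c + s) = q (c - s)"
  shows "integrable lborel (\<lambda>s. post lam v (\<lambda>_. 0) n (G_inv sigmaZ T (Qc q s)) * q s)"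
    and "(LINT s|lborel. post lam v (\<lambda>_. 0) n (G_inv sigmaZ T (Qc q s)) * q s) = 1 / 2"
proof -
  define h where "h s = post lam v (\<lambda>_. 0) n (G_inv sigmaZ T (Qc q s))" for s
  have "Qc q \<in> borel_measurable borel"
    using mono_atMost_integral[OF q q_nonneg]
    by (simp add: Qc_def[abs_def] borel_measurable_mono)
  then have "(\<lambda>s. G_inv sigmaZ T (Qc q s)) \<in> borel_measurable borel"
    by (rule measurable_compose[OF _ borel_measurable_G_inv])
  then have h_meas: "h \<in> borel_measurable borel"
    unfolding h_def[abs_def] by (rule measurable_compose[OF _ borel_measurable_post])
  have h_nonneg: "0 \<le> h s" for s
    by (simp add: h_def post_def add_pos_pos)
  have Qc_reflect: "Qc q (c - s) = 1 - Qc q (c + s)" for s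
    using set_integral_atMost_reflect[OF q q_sym, where s = s] total unfolding Qc_def by linarith
  have h_compl: "h (c - s) + h (c + s) = 1" for s
  proof -
    have "G_inv sigmaZ T (Qc q (c - s)) = - G_inv sigmaZ T (Qc q (c + s))"
      unfolding Qc_reflect by (rule G_inv_reflect)
    then show ?thesis
      using post_reflect[OF n] by (simp add: h_def)
  qed
  show "integrable lborel (\<lambda>s. post lam v (\<lambda>_. 0) n (G_inv sigmaZ T (Qc q s)) * q s)"
    using integral_mult_reflection_complementary(1)[OF q q_sym h_meas h_nonneg h_compl]
    by (simp add: h_def)
  show "(LINT s|lborel. post lam v (\<lambda>_. 0) n (G_inv sigmaZ T (Qc q s)) * q s) = 1 / 2"
    using integral_mult_reflection_complementary(2)[OF q q_sym h_meas h_nonneg h_compl] total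
    by (simp add: h_def)
qed

end

theorem proposition9:
  fixes v p :: "nat \<Rightarrow> real" and lam sigmaZ T :: real
  assumes v12: "v 1 < v 2"
    and p1: "p 1 = 1/2" and p2: "p 2 = 1/2"
    and lam: "lam > 0" and sZ: "sigmaZ > 0" and T: "T > 0"
  shows
    "(\<forall>(M::nat) (q::nat \<Rightarrow> real).
        M \<ge> 1 \<longrightarrow> (\<forall>m\<in>{1..M}. q m > 0) \<longrightarrow> (\<Sum>m=1..M. q m) = 1 \<longrightarrow>
        (\<forall>m\<in>{1..M}. q m = q (M + 1 - m)) \<longrightarrow>
        (\<forall>n\<in>{1,2}. (\<Sum>m=1..M. post lam v (\<lambda>_. 0) n (Isig sigmaZ T q m) * q m) = p n))
     \<and>
     (\<forall>(q::real \<Rightarrow> real) (c::real).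
        q \<in> borel_measurable lborel \<longrightarrow> (\<forall>s. q s \<ge> 0) \<longrightarrow>
        integrable lborel q \<longrightarrow> (LINT s|lborel. q s) = 1 \<longrightarrow>
        (\<forall>s. q (c + s) = q (c - s)) \<longrightarrow>
        (\<forall>n\<in>{1,2}.
           integrable lborel (\<lambda>s. post lam v (\<lambda>_. 0) n (G_inv sigmaZ T (Qc q s)) * q s) \<and>
           (LINT s|lborel. post lam v (\<lambda>_. 0) n (G_inv sigmaZ T (Qc q s)) * q s) = p n))"
proof (intro conjI allI impI ballI)
  fix M :: nat and q :: "nat \<Rightarrow> real" and n :: nat
  assume total: "(\<Sum>m=1..M. q m) = 1" and q_sym: "\<forall>m\<in>{1..M}. q m = q (M + 1 - m)"
    and n: "n \<in> {1, 2}"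
  have "(\<Sum>m=1..M. post lam v (\<lambda>_. 0) n (Isig sigmaZ T q m) * q m) = 1 / 2"
    by (rule sum_post_Isig_symmetric_signal[OF sZ T n]) (use q_sym total in auto)
  then show "(\<Sum>m=1..M. post lam v (\<lambda>_. 0) n (Isig sigmaZ T q m) * q m) = p n"
    using n p1 p2 by auto
next
  fix q :: "real \<Rightarrow> real" and c :: real and n :: nat
  assume q_nonneg: "\<forall>s. 0 \<le> q s" and q: "integrable lborel q"
    and total: "(LINT s|lborel. q s) = 1" and q_sym: "\<forall>s. q (c + s) = q (c - s)" and n: "n \<in> {1, 2}"
  note symmetric_density = integral_post_G_inv_Qc_symmetric_density[where c = c and lam = lam and v = v,
      OF sZ T n q q_nonneg[rule_format] total q_sym[rule_format]]
  show "integrable lborel (\<lambda>s. post lam v (\<lambda>_. 0) n (G_inv sigmaZ T (Qc q s)) * q s)"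
    by (fact symmetric_density(1))
  from symmetric_density(2) n p1 p2
  show "(LINT s|lborel. post lam v (\<lambda>_. 0) n (G_inv sigmaZ T (Qc q s)) * q s) = p n"
    by auto
qed

end
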